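(* Assume $a/b>\sqrt2$. For every self-intersected 4-periodic $P_1P_2P_3P_4$ (any parameter $u$ with $|u|\le u_{\max}$), the signed area of the polygon $P_1P_2P_3P_4$ is $0$, and the signed area of its outer polygon (whenever the outer polygon is defined) is also $0$.
   Context: The elliptic billiard is $\mathcal{E}: x^2/a^2+y^2/b^2=1$, $a>b>0$, $c=\sqrt{a^2-b^2}$. For $a/b>\sqrt2$ the self-intersected 4-periodics (closed 4-bounce billiard trajectories tangent to the confocal hyperbola $x^2/a''^2-y^2/b''^2=1$, $a''=a\sqrt{a^2-2b^2}/c$, $b''=b^2/c$) are parametrized by $u$ with $|u|\le u_{\max}:=\frac{a}{c^2}\sqrt{a^2-2b^2}$: $P_1=(au,\,b\sqrt{1-u^2})$, $P_3=(-au,\,b\sqrt{1-u^2})$, $P_2=\left(-\frac{a\sqrt{a^2(a^2-2b^2)-c^4u^2}}{c^2\sqrt{1-u^2}},\,-\frac{b^3}{c^2\sqrt{1-u^2}}\right)$, $P_4=\left(\frac{a\sqrt{a^2(a^2-2b^2)-c^4u^2}}{c^2\sqrt{1-u^2}},\,-\frac{b^3}{c^2\sqrt{1-u^2}}\right)$. The outer polygon has vertices $P_i'$, $i=1,\dots,4$, where $P_i'$ is the intersection of the tangent lines to $\mathcal{E}$ at $P_i$ and $P_{i+1}$ (indices mod 4). The signed area of a closed polygon $Q_1\dots Q_N$ with $Q_i=(x_i,y_i)$ is $\frac12\sum_{i=1}^N (x_iy_{i+1}-x_{i+1}y_i)$ (indices mod $N$). *)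

theory Defs
  imports Complex_Main
begin

type_synonym pt = "real \<times> real"

definition signed_area :: "pt list \<Rightarrow> real" where
  "signed_area Q = (let N = length Q in
     (1/2) * (\<Sum>i<N. fst (Q ! i) * snd (Q ! ((i+1) mod N))
                    - fst (Q ! ((i+1) mod N)) * snd (Q ! i)))"

definition ell_c :: "real \<Rightarrow> real \<Rightarrow> real" where
  "ell_c a b = sqrt (a^2 - b^2)"

definition u_max :: "real \<Rightarrow> real \<Rightarrow> real" where
  "u_max a b = a / (ell_c a b)^2 * sqrt (a^2 - 2*b^2)"

definition P4 :: "real \<Rightarrow> real \<Rightarrow> real \<Rightarrow> nat \<Rightarrow> pt" where
  "P4 a b u i = (let c = ell_c a b;
       X = a * sqrt (a^2 * (a^2 - 2*b^2) - c^4 * u^2) / (c^2 * sqrt (1 - u^2));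
       Y = - (b^3 / (c^2 * sqrt (1 - u^2))) in
     if i = 1 then (a*u, b * sqrt (1 - u^2))
     else if i = 2 then (-X, Y)
     else if i = 3 then (-a*u, b * sqrt (1 - u^2))
     else (X, Y))"

definition tangent_line :: "real \<Rightarrow> real \<Rightarrow> pt \<Rightarrow> pt set" where
  "tangent_line a b p = {q. fst q * fst p / a^2 + snd q * snd p / b^2 = 1}"

definition tangents_meet :: "real \<Rightarrow> real \<Rightarrow> pt \<Rightarrow> pt \<Rightarrow> bool" where
  "tangents_meet a b p q = (\<exists>!r. r \<in> tangent_line a b p \<inter> tangent_line a b q)"

definition tangent_intersection :: "real \<Rightarrow> real \<Rightarrow> pt \<Rightarrow> pt \<Rightarrow> pt" where
  "tangent_intersection a b p q = (THE r. r \<in> tangent_line a b p \<inter> tangent_line a b q)"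

definition succ4 :: "nat \<Rightarrow> nat" where "succ4 i = (if i = 4 then 1 else i + 1)"

definition outer_defined :: "real \<Rightarrow> real \<Rightarrow> real \<Rightarrow> bool" where
  "outer_defined a b u = (\<forall>i\<in>{1..4}. tangents_meet a b (P4 a b u i) (P4 a b u (succ4 i)))"

definition outer_vertex :: "real \<Rightarrow> real \<Rightarrow> real \<Rightarrow> nat \<Rightarrow> pt" where
  "outer_vertex a b u i = tangent_intersection a b (P4 a b u i) (P4 a b u (succ4 i))"

end

theory Submission
  imports Defs
begin

text \<open>Both quadrilaterals are symmetric under the reflection in the y-axis, which maps
  P1, P2 to P3, P4 and, since the ellipse and hence its tangent lines are symmetric, maps
  P'1, P'2 to P'3, P'4. For any quadrilateral A, B, A*, B* (star = mirror image) the
  shoelace terms of the two halves cancel, so its signed area vanishes. The hypotheses on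
  a, b, u only ensure that the 4-periodic is real; the symmetry needs none of them.\<close>

definition mirror_y :: "pt \<Rightarrow> pt" where
  "mirror_y p = (- fst p, snd p)"

lemma mirror_y_mirror_y [simp]: "mirror_y (mirror_y p) = p"
  by (simp add: mirror_y_def)

lemma signed_area_quadrilateral:
  "signed_area [A, B, C, D] = (1/2) *
     ((fst A * snd B - fst B * snd A) + (fst B * snd C - fst C * snd B)
    + (fst C * snd D - fst D * snd C) + (fst D * snd A - fst A * snd D))"
proof -
  have "{..<4::nat} = {0, 1, 2, 3}" by auto
  then show ?thesis by (simp add: signed_area_def)
qed

lemma signed_area_mirror_y_quadrilateral:
  "signed_area [A, B, mirror_y A, mirror_y B] = 0"
  by (simp add: signed_area_quadrilateral mirror_y_def algebra_simps)

lemma mem_tangent_line_mirror_y: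
  "r \<in> tangent_line a b (mirror_y p) \<longleftrightarrow> mirror_y r \<in> tangent_line a b p"
  by (simp add: tangent_line_def mirror_y_def)

lemma tangent_intersection_mirror_y:
  assumes "tangents_meet a b p q"
  shows "tangent_intersection a b (mirror_y p) (mirror_y q)
    = mirror_y (tangent_intersection a b p q)"
proof -
  let ?meet = "\<lambda>p q r. r \<in> tangent_line a b p \<inter> tangent_line a b q"
  from assms obtain r where r: "?meet p q r" and unique: "\<And>s. ?meet p q s \<Longrightarrow> s = r"
    unfolding tangents_meet_def by blast
  have "(THE s. ?meet p q s) = r"
    using r unique by blast
  moreover have "(THE s. ?meet (mirror_y p) (mirror_y q) s) = mirror_y r"
  proof (rule the_equality)
    show "?meet (mirror_y p) (mirror_y q) (mirror_y r)"
      using r by (simp add: mem_tangent_line_mirror_y)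
  next
    fix s assume "?meet (mirror_y p) (mirror_y q) s"
    then have "mirror_y s = r"
      by (intro unique) (simp add: mem_tangent_line_mirror_y)
    then show "s = mirror_y r" by auto
  qed
  ultimately show ?thesis
    unfolding tangent_intersection_def by simp
qed

lemma P4_mirror_y:
  "P4 a b u 3 = mirror_y (P4 a b u 1)" "P4 a b u 4 = mirror_y (P4 a b u 2)"
  by (simp_all add: P4_def mirror_y_def Let_def)

lemma outer_vertex_mirror_y:
  assumes "outer_defined a b u"
  shows "outer_vertex a b u 3 = mirror_y (outer_vertex a b u 1)"
    and "outer_vertex a b u 4 = mirror_y (outer_vertex a b u 2)"
proof -
  have succ4: "succ4 1 = 2" "succ4 2 = 3" "succ4 3 = 4" "succ4 4 = 1"
    by (simp_all add: succ4_def)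
  have "tangents_meet a b (P4 a b u i) (P4 a b u (succ4 i))" if "i \<in> {1..4}" for i
    using assms that unfolding outer_defined_def by blast
  from this[of 1, unfolded succ4] this[of 2, unfolded succ4]
  have meet12: "tangents_meet a b (P4 a b u 1) (P4 a b u 2)"
    and meet23: "tangents_meet a b (P4 a b u 2) (P4 a b u 3)"
    by simp_all
  have "P4 a b u 1 = mirror_y (P4 a b u 3)"
    by (simp add: P4_mirror_y)
  then show "outer_vertex a b u 4 = mirror_y (outer_vertex a b u 2)"
    using tangent_intersection_mirror_y[OF meet23]
    unfolding outer_vertex_def succ4 by (simp add: P4_mirror_y(2))
  show "outer_vertex a b u 3 = mirror_y (outer_vertex a b u 1)"
    using tangent_intersection_mirror_y[OF meet12]
    unfolding outer_vertex_def succ4 by (simp add: P4_mirror_y)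
qed

theorem mainTheorem2:
  fixes a b u :: real
  assumes "a > b" and "b > 0" and "a / b > sqrt 2"
    and "\<bar>u\<bar> \<le> u_max a b"
  shows "signed_area (map (P4 a b u) [1,2,3,4]) = 0
    \<and> (outer_defined a b u \<longrightarrow> signed_area (map (outer_vertex a b u) [1,2,3,4]) = 0)"
  using signed_area_mirror_y_quadrilateral
  by (simp add: P4_mirror_y outer_vertex_mirror_y)

end
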